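(* Let $\mathcal O\subseteq\mathrm{dS}^d$ be open and let $C=\{y\in\mathbb R^{1+d}:\beta(x,y)>-1\text{ for all }x\in\mathcal O\}$ (a convex subset of $\mathbb R^{1+d}$). Then $\mathcal O'=C^\circ\cap\mathrm{dS}^d$, where $C^\circ$ is the interior of $C$ in $\mathbb R^{1+d}$.
   Context: Let $d\ge1$, $\beta(x,y)=x_0y_0-x_1y_1-\dots-x_dy_d$ on $\mathbb R^{1+d}$, $\mathrm{dS}^d=\{x:\beta(x,x)=-1\}$. For open $\mathcal O\subseteq\mathrm{dS}^d$, its (open) spacelike complement is $\mathcal O'=$ the interior, relative to $\mathrm{dS}^d$, of $\{y\in\mathrm{dS}^d:\beta(x,y)>-1\ \text{for all } x\in\mathcal O\}$. *)

theory Defs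
  imports "HOL-Analysis.Analysis"
begin

text \<open>Minkowski space R^{1+d}: vectors indexed by 'd option; None is the time
  coordinate x_0, Some i are the d spatial coordinates (d = CARD('d) >= 1).\<close>

definition mink :: "real ^ ('d::finite option) \<Rightarrow> real ^ ('d option) \<Rightarrow> real" where
  "mink x y = x $ None * y $ None - (\<Sum>i\<in>UNIV. x $ Some i * y $ Some i)"

definition deSitter :: "(real ^ ('d::finite option)) set" where
  "deSitter = {x. mink x x = -1}"

definition spacelike_compl :: "(real ^ ('d::finite option)) set \<Rightarrow> (real ^ ('d option)) set" where
  "spacelike_compl U =
     (top_of_set deSitter) interior_of {y \<in> deSitter. \<forall>x\<in>U. mink x y > -1}"

end

theory Submission
  imports Defs
begin

text \<open>The inclusion from right to left is immediate. Conversely, let \<open>y \<in> \<O>'\<close>, so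
  \<open>\<beta>(x, w) > -1\<close> for all \<open>x \<in> \<O>\<close> and all \<open>w \<in> dS\<close> near \<open>y\<close>. If \<open>y\<close> were not interior
  to \<open>C\<close>, there would be \<open>z\<^sub>n \<rightarrow> y\<close> and \<open>x\<^sub>n \<in> \<O>\<close> with \<open>\<beta>(x\<^sub>n, z\<^sub>n) \<le> -1\<close>. Along a
  subsequence \<open>x\<^sub>n / (1 + |x\<^sub>n|) \<rightarrow> l\<close> and \<open>1 / (1 + |x\<^sub>n|) \<rightarrow> m = 1 - |l|\<close>, and in the
  limit \<open>\<beta>(l, y) \<le> -m \<le> \<beta>(l, w)\<close> for \<open>w \<in> dS\<close> near \<open>y\<close>. So \<open>y\<close> is a local minimum
  of \<open>\<beta>(l, \<cdot>)\<close> on \<open>dS\<close>, and the Lagrange condition gives \<open>l = m y\<close>. Hence \<open>m \<noteq> 0\<close>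
  and \<open>x\<^sub>n \<rightarrow> y\<close>; but then \<open>\<beta>(x\<^sub>n, x\<^sub>n) > -1\<close> for large \<open>n\<close>, although \<open>x\<^sub>n \<in> dS\<close>.\<close>

lemma mink_sym: "mink x y = mink y x"
  unfolding mink_def by (simp add: mult.commute)

lemma mink_add_left: "mink (x + y) z = mink x z + mink y z"
  unfolding mink_def by (simp add: algebra_simps sum.distrib)

lemma mink_add_right: "mink z (x + y) = mink z x + mink z y"
  by (metis mink_add_left mink_sym)

lemma mink_scaleR_left: "mink (c *\<^sub>R x) z = c * mink x z"
  unfolding mink_def by (simp add: algebra_simps sum_distrib_left)

lemma mink_scaleR_right: "mink z (c *\<^sub>R x) = c * mink z x"
  by (metis mink_scaleR_left mink_sym)

lemmas mink_linear = mink_add_left mink_add_right mink_scaleR_left mink_scaleR_right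

lemma tendsto_mink [tendsto_intros]:
  "(f \<longlongrightarrow> a) F \<Longrightarrow> (g \<longlongrightarrow> b) F \<Longrightarrow> ((\<lambda>n. mink (f n) (g n)) \<longlongrightarrow> mink a b) F"
  unfolding mink_def by (intro tendsto_intros)

lemma mink_nondegenerate:
  assumes "\<And>e. mink p e = 0"
  shows "p = 0"
proof -
  have "p $ i = 0" for i
    using assms[of "axis i 1"]
    by (cases i) (simp_all add: mink_def axis_def if_distrib cong: if_cong)
  then show ?thesis
    by (simp add: vec_eq_iff)
qed

text \<open>A rational parametrisation of the conic \<open>dS \<inter> span {y, v}\<close>, passing through \<open>y\<close>
  with velocity \<open>2 v\<close> at \<open>t = 0\<close>.\<close>

lemma mink_self_deSitter_curve:
  assumes y: "mink y y = -1" and v: "mink v y = 0" "mink v v = q" and D: "1 - q * t\<^sup>2 \<noteq> 0"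
  defines "w \<equiv> (1 / (1 - q * t\<^sup>2)) *\<^sub>R ((1 + q * t\<^sup>2) *\<^sub>R y + (2 * t) *\<^sub>R v)"
  shows "mink w w = -1"
proof -
  define c where "c = 1 / (1 - q * t\<^sup>2)"
  have "mink w w = - (c\<^sup>2 * ((1 + q * t\<^sup>2)\<^sup>2 - (2 * t)\<^sup>2 * q))"
    unfolding w_def c_def[symmetric]
    by (simp add: mink_linear y v mink_sym[of y v] power2_eq_square algebra_simps)
  also have "(1 + q * t\<^sup>2)\<^sup>2 - (2 * t)\<^sup>2 * q = (1 - q * t\<^sup>2)\<^sup>2"
    by (simp add: power2_eq_square algebra_simps)
  finally show ?thesis
    using D by (simp add: c_def power_divide)
qed

lemma deSitter_local_min_tangent:
  assumes y: "y \<in> deSitter" and "\<delta> > 0"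
    and min: "\<And>w. w \<in> deSitter \<Longrightarrow> dist w y < \<delta> \<Longrightarrow> mink p y \<le> mink p w"
    and v: "mink v y = 0"
  shows "mink p v = 0"
proof -
  define q where "q = mink v v"
  define w where "w t = (1 / (1 - q * t\<^sup>2)) *\<^sub>R ((1 + q * t\<^sup>2) *\<^sub>R y + (2 * t) *\<^sub>R v)" for t
  define g where "g t = ((1 + q * t\<^sup>2) * mink p y + 2 * t * mink p v) / (1 - q * t\<^sup>2)" for t
  have yy: "mink y y = -1"
    using y by (simp add: deSitter_def)
  have g_w: "g t = mink p (w t)" for t
    unfolding g_def w_def by (simp add: mink_linear)
  have "(w \<longlongrightarrow> w 0) (at 0)"
    unfolding w_def by (intro tendsto_intros) auto
  then have "\<forall>\<^sub>F t in at 0. dist (w t) y < \<delta>"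
    using \<open>\<delta> > 0\<close> tendstoD by (fastforce simp: w_def)
  moreover have "((\<lambda>t. 1 - q * t\<^sup>2) \<longlongrightarrow> 1 - q * 0\<^sup>2) (at 0)"
    by (intro tendsto_intros)
  then have "\<forall>\<^sub>F t in at 0. 1 - q * t\<^sup>2 \<noteq> 0"
    by (rule tendsto_imp_eventually_ne) simp
  ultimately have "\<forall>\<^sub>F t in at 0. dist (w t) y < \<delta> \<and> 1 - q * t\<^sup>2 \<noteq> 0"
    by (rule eventually_conj)
  then obtain d where "d > 0"
    and d: "\<And>t. t \<noteq> 0 \<Longrightarrow> \<bar>t\<bar> < d \<Longrightarrow> dist (w t) y < \<delta> \<and> 1 - q * t\<^sup>2 \<noteq> 0"
    unfolding eventually_at by auto
  have local_min: "g 0 \<le> g t" if "\<bar>0 - t\<bar> < d" for t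
  proof (cases "t = 0")
    case False
    with d that have "w t \<in> deSitter" "dist (w t) y < \<delta>"
      by (auto simp: deSitter_def w_def intro!: mink_self_deSitter_curve yy v q_def[symmetric])
    then show ?thesis
      using min by (simp add: g_w w_def)
  qed simp
  have "(g has_real_derivative 2 * mink p v) (at 0)"
    unfolding g_def by (auto intro!: derivative_eq_intros)
  from DERIV_local_min[OF this \<open>d > 0\<close>] local_min show ?thesis
    by simp
qed

lemma deSitter_local_min_normal:
  assumes y: "y \<in> deSitter" and "\<delta> > 0"
    and min: "\<And>w. w \<in> deSitter \<Longrightarrow> dist w y < \<delta> \<Longrightarrow> mink p y \<le> mink p w"
  shows "p = (- mink p y) *\<^sub>R y"
proof -
  have yy: "mink y y = -1"
    using y by (simp add: deSitter_def)
  have "mink (p + mink p y *\<^sub>R y) e = 0" for e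
  proof -
    have "mink (e + mink e y *\<^sub>R y) y = 0"
      by (simp add: mink_linear yy)
    with deSitter_local_min_tangent[OF y \<open>\<delta> > 0\<close> min]
    have "mink p (e + mink e y *\<^sub>R y) = 0"
      by blast
    then show ?thesis
      by (simp add: mink_linear mink_sym[of y e] mult.commute)
  qed
  then have "p + mink p y *\<^sub>R y = 0"
    by (rule mink_nondegenerate)
  then show ?thesis
    by (simp add: eq_neg_iff_add_eq_0)
qed

lemma rescaled_convergent_subseq:
  fixes x :: "nat \<Rightarrow> 'a::{real_normed_vector, heine_borel}"
  obtains r l where "strict_mono r"
    and "(\<lambda>n. (1 / (1 + norm (x (r n)))) *\<^sub>R x (r n)) \<longlonglongrightarrow> l"
    and "(\<lambda>n. 1 / (1 + norm (x (r n)))) \<longlonglongrightarrow> 1 - norm l"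
proof -
  define \<mu> where "\<mu> n = 1 / (1 + norm (x n))" for n
  have norm_rescaled: "norm (\<mu> n *\<^sub>R x n) = 1 - \<mu> n" for n
  proof -
    have "1 + norm (x n) > 0"
      by (simp add: add_pos_nonneg)
    then show ?thesis
      by (simp add: \<mu>_def field_simps)
  qed
  have "\<mu> n > 0" for n
    by (simp add: \<mu>_def add_pos_nonneg)
  then have "\<forall>n. \<mu> n *\<^sub>R x n \<in> cball 0 1"
    unfolding mem_cball_0 norm_rescaled by (simp add: less_imp_le)
  with compact_imp_seq_compact[OF compact_cball]
  obtain l r where r: "strict_mono r" and lim: "((\<lambda>n. \<mu> n *\<^sub>R x n) \<circ> r) \<longlonglongrightarrow> l"
    by (rule seq_compactE)
  have "(\<lambda>n. 1 - norm (((\<lambda>n. \<mu> n *\<^sub>R x n) \<circ> r) n)) \<longlonglongrightarrow> 1 - norm l"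
    by (intro tendsto_intros lim)
  then have "(\<lambda>n. \<mu> (r n)) \<longlonglongrightarrow> 1 - norm l"
    unfolding comp_def norm_rescaled by simp
  with r lim show ?thesis
    by (intro that) (simp_all add: \<mu>_def comp_def)
qed

lemma mem_spacelike_compl_iff:
  "y \<in> spacelike_compl U \<longleftrightarrow>
     y \<in> deSitter \<and> (\<exists>\<delta>>0. \<forall>w\<in>deSitter. dist w y < \<delta> \<longrightarrow> (\<forall>x\<in>U. mink x w > -1))"
proof
  assume "y \<in> spacelike_compl U"
  then obtain T where T: "openin (top_of_set deSitter) T" "y \<in> T"
    and T_sub: "T \<subseteq> {w \<in> deSitter. \<forall>x\<in>U. mink x w > -1}"
    unfolding spacelike_compl_def interior_of_def by blast
  then obtain \<delta> where "\<delta> > 0" and ball_sub: "ball y \<delta> \<inter> deSitter \<subseteq> T"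
    by (meson openin_contains_ball)
  have "w \<in> T" if "w \<in> deSitter" "dist w y < \<delta>" for w
    using that ball_sub by (auto simp: dist_commute)
  with T(2) T_sub \<open>\<delta> > 0\<close>
  show "y \<in> deSitter \<and> (\<exists>\<delta>>0. \<forall>w\<in>deSitter. dist w y < \<delta> \<longrightarrow> (\<forall>x\<in>U. mink x w > -1))"
    by blast
next
  assume "y \<in> deSitter \<and> (\<exists>\<delta>>0. \<forall>w\<in>deSitter. dist w y < \<delta> \<longrightarrow> (\<forall>x\<in>U. mink x w > -1))"
  then obtain \<delta> where "y \<in> deSitter" "\<delta> > 0"
    and \<delta>: "\<forall>w\<in>deSitter. dist w y < \<delta> \<longrightarrow> (\<forall>x\<in>U. mink x w > -1)"
    by blast
  have "openin (top_of_set deSitter) (deSitter \<inter> ball y \<delta>)"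
    by (simp add: openin_open_Int)
  moreover have "deSitter \<inter> ball y \<delta> \<subseteq> {w \<in> deSitter. \<forall>x\<in>U. mink x w > -1}"
    using \<delta> by (auto simp: dist_commute)
  moreover have "y \<in> deSitter \<inter> ball y \<delta>"
    using \<open>y \<in> deSitter\<close> \<open>\<delta> > 0\<close> by simp
  ultimately show "y \<in> spacelike_compl U"
    unfolding spacelike_compl_def interior_of_def by blast
qed

lemma deSitter_nhd_imp_mem_interior:
  assumes U: "U \<subseteq> deSitter" and y: "y \<in> deSitter" and "\<delta> > 0"
    and nhd: "\<And>w. w \<in> deSitter \<Longrightarrow> dist w y < \<delta> \<Longrightarrow> \<forall>x\<in>U. mink x w > -1"
  shows "y \<in> interior {z. \<forall>x\<in>U. mink x z > -1}"
proof (rule ccontr)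
  assume "y \<notin> interior {z. \<forall>x\<in>U. mink x z > -1}"
  then obtain z where z_lim: "z \<longlonglongrightarrow> y" and "\<forall>n. z n \<notin> {z. \<forall>x\<in>U. mink x z > -1}"
    by (auto simp: interior_closure closure_sequential)
  then have "\<forall>n. \<exists>x\<in>U. mink x (z n) \<le> -1"
    by (auto simp: not_less)
  then obtain x where x: "\<And>n. x n \<in> U" and xz: "\<And>n. mink (x n) (z n) \<le> -1"
    by metis
  obtain r l where r: "strict_mono r"
    and l_lim: "(\<lambda>n. (1 / (1 + norm (x (r n)))) *\<^sub>R x (r n)) \<longlonglongrightarrow> l"
    and \<mu>_lim: "(\<lambda>n. 1 / (1 + norm (x (r n)))) \<longlonglongrightarrow> 1 - norm l"
    by (rule rescaled_convergent_subseq)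
  define \<mu> where "\<mu> n = 1 / (1 + norm (x (r n)))" for n
  define m where "m = 1 - norm l"
  have \<mu>_pos: "\<mu> n > 0" for n
    by (simp add: \<mu>_def add_pos_nonneg)
  have upper: "mink l y \<le> - m"
  proof (rule tendsto_le[OF trivial_limit_sequentially])
    show "(\<lambda>n. mink (\<mu> n *\<^sub>R x (r n)) (z (r n))) \<longlonglongrightarrow> mink l y"
      using l_lim LIMSEQ_subseq_LIMSEQ[OF z_lim r] by (intro tendsto_intros) (simp_all add: \<mu>_def comp_def)
    show "(\<lambda>n. - \<mu> n) \<longlonglongrightarrow> - m"
      using \<mu>_lim by (intro tendsto_intros) (simp add: \<mu>_def m_def)
    have "\<mu> n * mink (x (r n)) (z (r n)) \<le> \<mu> n * (-1)" for n
      using xz \<mu>_pos by (intro mult_left_mono) (auto simp: less_imp_le)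
    then show "\<forall>\<^sub>F n in sequentially. mink (\<mu> n *\<^sub>R x (r n)) (z (r n)) \<le> - \<mu> n"
      by (simp add: mink_linear always_eventually)
  qed
  have lower: "- m \<le> mink l w" if "w \<in> deSitter" "dist w y < \<delta>" for w
  proof (rule tendsto_le[OF trivial_limit_sequentially])
    show "(\<lambda>n. mink (\<mu> n *\<^sub>R x (r n)) w) \<longlonglongrightarrow> mink l w"
      using l_lim by (intro tendsto_intros) (simp add: \<mu>_def)
    show "(\<lambda>n. - \<mu> n) \<longlonglongrightarrow> - m"
      using \<mu>_lim by (intro tendsto_intros) (simp add: \<mu>_def m_def)
    have "\<mu> n * (-1) \<le> \<mu> n * mink (x (r n)) w" for n
      using nhd[OF that] x \<mu>_pos by (intro mult_left_mono) (auto simp: less_imp_le)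
    then show "\<forall>\<^sub>F n in sequentially. - \<mu> n \<le> mink (\<mu> n *\<^sub>R x (r n)) w"
      by (simp add: mink_linear always_eventually)
  qed
  have ly: "mink l y = - m"
    using upper lower[OF y] \<open>\<delta> > 0\<close> by simp
  then have "l = m *\<^sub>R y"
    using deSitter_local_min_normal[OF y \<open>\<delta> > 0\<close>, of l] lower by simp
  then have "m \<noteq> 0"
    by (auto simp: m_def)
  have "(\<lambda>n. (1 / \<mu> n) *\<^sub>R (\<mu> n *\<^sub>R x (r n))) \<longlonglongrightarrow> (1 / m) *\<^sub>R l"
    using l_lim \<mu>_lim \<open>m \<noteq> 0\<close> by (intro tendsto_intros) (simp_all add: \<mu>_def m_def)
  moreover have "(1 / \<mu> n) *\<^sub>R (\<mu> n *\<^sub>R x (r n)) = x (r n)" for n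
    using \<mu>_pos[of n] by simp
  ultimately have "(\<lambda>n. x (r n)) \<longlonglongrightarrow> y"
    using \<open>l = m *\<^sub>R y\<close> \<open>m \<noteq> 0\<close> by simp
  then have "\<forall>\<^sub>F n in sequentially. dist (x (r n)) y < \<delta>"
    using \<open>\<delta> > 0\<close> by (rule tendstoD)
  then obtain n where "dist (x (r n)) y < \<delta>"
    by (auto simp: eventually_sequentially)
  moreover have "x (r n) \<in> deSitter"
    using x U by blast
  ultimately have "mink (x (r n)) (x (r n)) > -1"
    using nhd x by blast
  with \<open>x (r n) \<in> deSitter\<close> show False
    by (simp add: deSitter_def)
qed

theorem mainTheorem12:
  fixes U :: "(real ^ ('d::finite option)) set"
  assumes "openin (top_of_set deSitter) U"
  shows "spacelike_compl U = interior {y. \<forall>x\<in>U. mink x y > -1} \<inter> deSitter"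
proof (intro equalityI subsetI)
  fix y
  assume "y \<in> spacelike_compl U"
  then obtain \<delta> where y: "y \<in> deSitter" and "\<delta> > 0"
    and "\<forall>w\<in>deSitter. dist w y < \<delta> \<longrightarrow> (\<forall>x\<in>U. mink x w > -1)"
    by (auto simp: mem_spacelike_compl_iff)
  with deSitter_nhd_imp_mem_interior[OF openin_imp_subset[OF assms] y \<open>\<delta> > 0\<close>]
  show "y \<in> interior {y. \<forall>x\<in>U. mink x y > -1} \<inter> deSitter"
    by blast
next
  fix y
  assume "y \<in> interior {y. \<forall>x\<in>U. mink x y > -1} \<inter> deSitter"
  then obtain \<delta> where "y \<in> deSitter" "\<delta> > 0" and ball: "ball y \<delta> \<subseteq> {y. \<forall>x\<in>U. mink x y > -1}"
    by (auto simp: mem_interior)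
  moreover have "\<forall>w\<in>deSitter. dist w y < \<delta> \<longrightarrow> (\<forall>x\<in>U. mink x w > -1)"
    using ball by (auto simp: dist_commute subset_iff)
  ultimately show "y \<in> spacelike_compl U"
    by (auto simp: mem_spacelike_compl_iff)
qed

end
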